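(* Let the polynomials $\nu_r(x)$ be defined by $\nu_0 = 1$, $\nu_1 = 0$ and $\nu_r(x) = x \sum_{j=0}^{r-2} \binom{r-1}{j} \nu_j(x)$ for $r\ge2$. Then for every integer $m\ge1$ and every real $x \geq 0$, \[ \nu_{2m}(x) \leq m \max\left( e^{m-1} (mx)^m,\ m^{2m-1} x\right). \] *)

theory Defs
  imports Complex_Main "HOL-Computational_Algebra.Polynomial"
begin

function nu :: "nat \<Rightarrow> real poly" where
  "nu 0 = 1"
| "nu (Suc 0) = 0"
| "nu (Suc (Suc n)) = [:0, 1:] * (\<Sum>j\<le>n. of_nat ((Suc n) choose j) * nu j)"
  by pat_completeness auto
termination by (relation "measure id") auto

end

theory Submission
  imports Defs
begin

text \<open>The coefficient of x^k in nu_r counts the partitions of an r-set into k blocks, none of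
  them a singleton (the recursion removes the block containing the last element). Hence it
  vanishes unless 2k \<le> r, and it is at most k^r / k!, which the recursion confirms directly via
  the binomial theorem. Together with k^k \<le> k! e^(k-1), the k-th term of nu_2m(x) is at most
  m^(2m-1) x t^(k-1) with t = e x / m; over 1 \<le> k \<le> m this geometric progression is largest
  at an endpoint, and there are only m nonzero terms.\<close>

lemma coeff_nu_Suc_Suc:
  "coeff (nu (Suc (Suc n))) (Suc k) = (\<Sum>j\<le>n. real (Suc n choose j) * coeff (nu j) k)"
  by (simp add: coeff_sum of_nat_poly)

lemma coeff_nu_Suc_Suc_0: "coeff (nu (Suc (Suc n))) 0 = 0"
  by simp

lemma coeff_nu_nonneg: "0 \<le> coeff (nu r) k"
proof (induction r arbitrary: k rule: nu.induct)
  case (3 n)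
  then show ?case
    by (cases k) (auto simp del: nu.simps simp: coeff_nu_Suc_Suc_0 coeff_nu_Suc_Suc intro!: sum_nonneg)
qed (auto simp: coeff_1)

lemma coeff_nu_eq_0: "r < 2 * k \<Longrightarrow> coeff (nu r) k = 0"
proof (induction r arbitrary: k rule: nu.induct)
  case (3 n)
  then show ?case
    by (cases k) (auto simp del: nu.simps simp: coeff_nu_Suc_Suc_0 coeff_nu_Suc_Suc)
qed (auto simp: coeff_1)

lemma coeff_nu_le: "coeff (nu r) k \<le> real k ^ r / fact k"
proof (induction r arbitrary: k rule: nu.induct)
  case (3 n)
  show ?case
  proof (cases k)
    case (Suc l)
    have "coeff (nu (Suc (Suc n))) k \<le> (\<Sum>j\<le>n. real (Suc n choose j) * (real l ^ j / fact l))"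
      unfolding Suc coeff_nu_Suc_Suc using "3.IH" by (intro sum_mono mult_left_mono) auto
    also have "\<dots> \<le> (\<Sum>j\<le>Suc n. real (Suc n choose j) * (real l ^ j / fact l))"
      by (intro sum_mono2) auto
    also have "\<dots> = (\<Sum>j\<le>Suc n. real (Suc n choose j) * real l ^ j * 1 ^ (Suc n - j)) / fact l"
      by (simp add: sum_divide_distrib add_divide_distrib)
    also have "\<dots> = (real l + 1) ^ Suc n / fact l"
      by (simp only: binomial_ring)
    also have "\<dots> = real k * (real l + 1) ^ Suc n / (real k * fact l)"
      using Suc by simp
    also have "\<dots> = real k ^ Suc (Suc n) / fact k"
      using Suc by (simp add: add.commute)
    finally show ?thesis .
  qed simp
qed simp_all

lemma power_le_fact_mult_exp:
  assumes "1 \<le> k"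
  shows "real k ^ k \<le> fact k * exp (real k - 1)"
  using assms
proof (induction k rule: dec_induct)
  case (step k)
  have "real (Suc k) ^ Suc k = real (Suc k) * (real k ^ k * (1 + 1 / real k) ^ k)"
    using step.hyps by (simp add: power_mult_distrib[symmetric] field_simps)
  also have "\<dots> \<le> real (Suc k) * (fact k * exp (real k - 1) * exp 1)"
    using step.hyps step.IH exp_ge_one_plus_x_over_n_power_n[where n = k and x = 1]
    by (intro mult_left_mono mult_mono) (auto simp: Suc_le_eq)
  also have "\<dots> = fact (Suc k) * exp (real (Suc k) - 1)"
    by (simp add: exp_add[symmetric])
  finally show ?case .
qed simp

lemma power_div_fact_le:
  assumes "1 \<le> k" "k \<le> n" "k \<le> r"
  shows "real k ^ r / fact k \<le> exp (real k - 1) * real n ^ (r - k)"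
proof -
  have "real k ^ r = real k ^ k * real k ^ (r - k)"
    using assms by (simp flip: power_add)
  also have "\<dots> \<le> fact k * exp (real k - 1) * real n ^ (r - k)"
    using assms power_le_fact_mult_exp[of k] by (intro mult_mono power_mono) auto
  finally show ?thesis
    by (simp add: divide_le_eq mult.commute mult.left_commute)
qed

lemma power_le_max_power_one:
  fixes t :: real
  assumes "0 \<le> t" "i \<le> n"
  shows "t ^ i \<le> max (t ^ n) 1"
proof (cases "t \<le> 1")
  case True
  then show ?thesis using assms by (simp add: power_le_one le_max_iff_disj)
next
  case False
  then show ?thesis using assms by (simp add: power_increasing le_max_iff_disj)
qed

lemma exp_power_as_geometric:
  fixes x :: real
  assumes "1 \<le> k" "k \<le> m"
  shows "exp (real k - 1) * real m ^ (2 * m - k) * x ^ k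
           = real m ^ (2 * m - 1) * x * (exp 1 * x / real m) ^ (k - 1)"
proof -
  have "real m ^ (2 * m - 1) = real m ^ (2 * m - k) * real m ^ (k - 1)"
    using assms by (simp flip: power_add)
  moreover have "exp (real k - 1) = exp 1 ^ (k - 1)"
    using assms by (simp add: of_nat_diff flip: exp_of_nat_mult)
  moreover have "x ^ k = x * x ^ (k - 1)"
    using assms by (simp flip: power_Suc)
  ultimately show ?thesis
    using assms by (simp add: power_divide field_simps)
qed

lemma exp_power_term_le:
  fixes x :: real
  assumes "1 \<le> k" "k \<le> m" "0 \<le> x"
  shows "exp (real k - 1) * real m ^ (2 * m - k) * x ^ k
           \<le> max (exp (real m - 1) * (real m * x) ^ m) (real m ^ (2 * m - 1) * x)"
proof -
  define t where "t = exp 1 * x / real m"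
  have "exp (real k - 1) * real m ^ (2 * m - k) * x ^ k = real m ^ (2 * m - 1) * x * t ^ (k - 1)"
    unfolding t_def using assms(1,2) by (rule exp_power_as_geometric)
  also have "\<dots> \<le> real m ^ (2 * m - 1) * x * max (t ^ (m - 1)) 1"
    using assms by (intro mult_left_mono power_le_max_power_one) (auto simp: t_def)
  also have "\<dots> = max (real m ^ (2 * m - 1) * x * t ^ (m - 1)) (real m ^ (2 * m - 1) * x)"
    using assms by (simp add: max_mult_distrib_left)
  also have "real m ^ (2 * m - 1) * x * t ^ (m - 1) = exp (real m - 1) * (real m * x) ^ m"
    using exp_power_as_geometric[of m m x] assms by (simp add: t_def mult_2 power_mult_distrib)
  finally show ?thesis .
qed

theorem proposition20:
  fixes m :: nat and x :: real
  assumes "m \<ge> 1" and "x \<ge> 0"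
  shows "poly (nu (2 * m)) x
           \<le> real m * max (exp (real m - 1) * (real m * x) ^ m) (real m ^ (2 * m - 1) * x)"
proof -
  let ?M = "max (exp (real m - 1) * (real m * x) ^ m) (real m ^ (2 * m - 1) * x)"
  let ?c = "coeff (nu (2 * m))"
  have "degree (nu (2 * m)) \<le> m"
    by (intro degree_le allI impI coeff_nu_eq_0) simp
  then have "poly (nu (2 * m)) x = poly (\<Sum>i\<le>m. monom (?c i) i) x"
    by (simp only: poly_as_sum_of_monoms')
  also have "\<dots> = (\<Sum>i\<le>m. ?c i * x ^ i)"
    by (simp add: poly_sum poly_monom)
  also have "\<dots> = (\<Sum>i\<in>{1..m}. ?c i * x ^ i)"
    using assms coeff_nu_nonneg[of "2 * m" 0] coeff_nu_le[of "2 * m" 0]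
    by (intro sum.mono_neutral_right) (auto simp: Suc_le_eq power_0_left)
  also have "\<dots> \<le> (\<Sum>i\<in>{1..m}. ?M)"
  proof (intro sum_mono)
    fix i assume i: "i \<in> {1..m}"
    have "?c i * x ^ i \<le> exp (real i - 1) * real m ^ (2 * m - i) * x ^ i"
      using i assms coeff_nu_le[of "2 * m" i] power_div_fact_le[of i m "2 * m"]
      by (intro mult_right_mono) auto
    also have "\<dots> \<le> ?M"
      using i assms by (intro exp_power_term_le) auto
    finally show "?c i * x ^ i \<le> ?M" .
  qed
  also have "\<dots> = real m * ?M"
    by simp
  finally show ?thesis .
qed

end
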